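(* Let $k \geq 2$ be an integer. For integers $d, i, u$ with $1 \le d \le k$ and $0 \le u \le k$, let $$D(d,i,u) = \frac{\binom{u}{i}\binom{k-u}{d-i}}{\binom{k}{d}},$$ with the convention that a binomial coefficient $\binom{n}{m}$ is $0$ when $m<0$ or $m>n$. Then for all integers $d$ with $1 \le d \le k-1$ and all $u$ with $0 \le u \le k$ and $u \le \frac{k+1}{d+1}$, we have $$D(d+1,i,u) \ge D(d,i,u) \quad \text{for every integer } i > 0 .$$ In words, the utility degree distribution of degree $d+1$ dominates that of degree $d$ on all nonzero utility degrees.
   Context: Setting: LT codes with $k$ input symbols. An output symbol of degree $d$ is the XOR of $d$ distinct input symbols (its neighbors) chosen uniformly at random. At some moment of decoding, $u$ input symbols are still unsolved. The utility degree of a received output symbol is the number of its neighbors that are still unsolved. Thus $D(d,i,u)$ is the probability that an output symbol of degree $d$ has utility degree $i$ when $u$ input symbols are unsolved (a hypergeometric distribution, nonzero only for $\max(0,d-k+u) \le i \le \min(d,u)$). *)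

theory Defs
  imports Complex_Main
begin

definition ibinom :: "int \<Rightarrow> int \<Rightarrow> real" where
  "ibinom n m = (if m < 0 \<or> m > n \<or> n < 0 then 0 else real (nat n choose nat m))"

definition Dutil :: "int \<Rightarrow> int \<Rightarrow> int \<Rightarrow> int \<Rightarrow> real" where
  "Dutil k d i u = ibinom u i * ibinom (k - u) (d - i) / ibinom k d"

end

theory Submission
  imports Defs
begin

text \<open>Raising the degree from d to d + 1 multiplies D(d,i,u) by
  ((k-u)-(d-i)) / (d-i+1) \<cdot> (d+1) / (k-d), by the absorption identity for consecutive
  binomial coefficients. This factor is at least 1 iff i(k+1) \<ge> u(d+1), which holds
  for i \<ge> 1 as soon as u(d+1) \<le> k+1; for i > d the left side D(d,i,u) is 0.\<close>

lemma ibinom_nat: "0 \<le> n \<Longrightarrow> 0 \<le> m \<Longrightarrow> ibinom n m = real (nat n choose nat m)"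
  unfolding ibinom_def by (auto simp: binomial_eq_0)

lemma ibinom_nonneg: "0 \<le> ibinom n m"
  unfolding ibinom_def by auto

lemma Dutil_nonneg: "0 \<le> Dutil k d i u"
  unfolding Dutil_def by (simp add: ibinom_nonneg)

lemma Dutil_eq_0_if_degree_less: "d < i \<Longrightarrow> Dutil k d i u = 0"
  unfolding Dutil_def ibinom_def by simp

lemma choose_Suc_cross_le:
  fixes m n b e :: nat
  assumes "Suc b * (n - e) \<le> (m - b) * Suc e"
  shows "(m choose b) * (n choose Suc e) \<le> (m choose Suc b) * (n choose e)"
proof -
  have absorb: "Suc c * (p choose Suc c) = (p - c) * (p choose c)" for p c :: nat
    by (metis binomial_absorb_comp binomial_absorption)
  have "Suc b * Suc e * ((m choose b) * (n choose Suc e))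
      = Suc b * (m choose b) * (Suc e * (n choose Suc e))"
    by (simp only: ac_simps)
  also have "\<dots> = Suc b * (n - e) * ((m choose b) * (n choose e))"
    by (simp only: absorb ac_simps)
  also have "\<dots> \<le> (m - b) * Suc e * ((m choose b) * (n choose e))"
    using assms by (rule mult_right_mono) simp
  also have "\<dots> = Suc e * (n choose e) * ((m - b) * (m choose b))"
    by (simp only: ac_simps)
  also have "\<dots> = Suc e * (n choose e) * (Suc b * (m choose Suc b))"
    by (simp only: absorb)
  also have "\<dots> = Suc b * Suc e * ((m choose Suc b) * (n choose e))"
    by (simp only: ac_simps)
  finally show ?thesis
    by (simp only: mult_le_cancel1) simp
qed

lemma Dutil_le_Dutil_Suc_degree:
  fixes k d i u :: int
  assumes "0 \<le> u" "u \<le> k" "0 \<le> i" "i \<le> d" "d < k"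
    and ratio: "(d - i + 1) * (k - d) \<le> (k - u - (d - i)) * (d + 1)"
  shows "Dutil k d i u \<le> Dutil k (d + 1) i u"
proof -
  define m b n e where "m = nat (k - u)" "b = nat (d - i)" "n = nat k" "e = nat d"
  have "0 < (d - i + 1) * (k - d)"
    using assms by simp
  then have "0 < k - u - (d - i)"
    using ratio assms by (smt (verit) zero_less_mult_iff)
  then have "int (m - b) = k - u - (d - i)" "int (n - e) = k - d"
      "int (Suc b) = d - i + 1" "int (Suc e) = d + 1"
    using assms by (simp_all add: m_b_n_e_def)
  then have "int (Suc b * (n - e)) \<le> int ((m - b) * Suc e)"
    using ratio by (simp only: of_nat_mult)
  then have "(m choose b) * (n choose Suc e) \<le> (m choose Suc b) * (n choose e)"
    by (intro choose_Suc_cross_le) (simp only: of_nat_le_iff)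
  moreover have "e < n"
    using assms by (simp add: m_b_n_e_def)
  ultimately have "real (m choose b) / real (n choose e)
      \<le> real (m choose Suc b) / real (n choose Suc e)"
    by (simp add: divide_le_eq le_divide_eq mult.commute flip: of_nat_mult)
  moreover have "nat (d + 1 - i) = Suc b" "nat (d + 1) = Suc e"
    using assms by (simp_all add: m_b_n_e_def)
  ultimately show ?thesis
    unfolding Dutil_def using assms
    by (simp add: ibinom_nat m_b_n_e_def mult_left_mono ibinom_nonneg
        flip: times_divide_eq_right)
qed

theorem mainTheorem1:
  fixes k d u i :: int
  assumes "k \<ge> 2"
    and "1 \<le> d" and "d \<le> k - 1"
    and "0 \<le> u" and "u \<le> k"
    and "real_of_int u \<le> real_of_int (k + 1) / real_of_int (d + 1)"
    and "i > 0"
  shows "Dutil k (d + 1) i u \<ge> Dutil k d i u"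
proof (cases "i \<le> d")
  case False
  then show ?thesis
    by (simp add: Dutil_eq_0_if_degree_less Dutil_nonneg)
next
  case True
  have "real_of_int (u * (d + 1)) \<le> real_of_int (k + 1)"
    using assms(2,6) by (simp add: pos_le_divide_eq)
  then have "u * (d + 1) \<le> i * (k + 1)"
    using assms(1,7) by (smt (verit) mult_le_cancel_right1 of_int_le_iff)
  moreover have "(k - u - (d - i)) * (d + 1) - (d - i + 1) * (k - d) = i * (k + 1) - u * (d + 1)"
    by (simp add: algebra_simps)
  ultimately show ?thesis
    using True assms by (intro Dutil_le_Dutil_Suc_degree) auto
qed

end
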